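(* Let $A$ be a threshold graph with $|V(A)|>1$. Then a vertex $t\in V(A)$ is $A$-terminal if and only if $t$ is not $\overline{A}$-terminal. Consequently every two $A$-terminal vertices are nonadjacent, and every two $A$-non-terminal vertices are adjacent.
   Context: A threshold graph is a graph with no induced four-vertex path, four-vertex cycle, or complement of a four-vertex cycle. $\overline{A}$ is the complement graph. In a graph $H$, a vertex $u$ $H$-dominates a vertex $v\ne u$ if $u,v$ are adjacent and every neighbour of $v$ is equal or adjacent to $u$. A vertex $t$ is $H$-non-terminal if there exists $s\in V(H)\setminus\{t\}$ such that $t$ $H$-dominates $s$, and $H$-terminal otherwise. *)

theory Defs
  imports Main
begin

definition simple_graph :: "'a set \<Rightarrow> ('a \<Rightarrow> 'a \<Rightarrow> bool) \<Rightarrow> bool" where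
  "simple_graph V E \<longleftrightarrow> finite V \<and> (\<forall>u v. E u v \<longrightarrow> u \<in> V \<and> v \<in> V) \<and>
     (\<forall>u v. E u v \<longrightarrow> E v u) \<and> (\<forall>v. \<not> E v v)"

definition compl_graph :: "'a set \<Rightarrow> ('a \<Rightarrow> 'a \<Rightarrow> bool) \<Rightarrow> 'a \<Rightarrow> 'a \<Rightarrow> bool" where
  "compl_graph V E u v \<longleftrightarrow> u \<in> V \<and> v \<in> V \<and> u \<noteq> v \<and> \<not> E u v"

definition induced_P4 :: "'a set \<Rightarrow> ('a \<Rightarrow> 'a \<Rightarrow> bool) \<Rightarrow> 'a \<Rightarrow> 'a \<Rightarrow> 'a \<Rightarrow> 'a \<Rightarrow> bool" where
  "induced_P4 V E a b c d \<longleftrightarrow> a \<in> V \<and> b \<in> V \<and> c \<in> V \<and> d \<in> V \<and> distinct [a, b, c, d] \<and>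
     E a b \<and> E b c \<and> E c d \<and> \<not> E a c \<and> \<not> E b d \<and> \<not> E a d"

definition induced_C4 :: "'a set \<Rightarrow> ('a \<Rightarrow> 'a \<Rightarrow> bool) \<Rightarrow> 'a \<Rightarrow> 'a \<Rightarrow> 'a \<Rightarrow> 'a \<Rightarrow> bool" where
  "induced_C4 V E a b c d \<longleftrightarrow> a \<in> V \<and> b \<in> V \<and> c \<in> V \<and> d \<in> V \<and> distinct [a, b, c, d] \<and>
     E a b \<and> E b c \<and> E c d \<and> E d a \<and> \<not> E a c \<and> \<not> E b d"

definition induced_2K2 :: "'a set \<Rightarrow> ('a \<Rightarrow> 'a \<Rightarrow> bool) \<Rightarrow> 'a \<Rightarrow> 'a \<Rightarrow> 'a \<Rightarrow> 'a \<Rightarrow> bool" where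
  "induced_2K2 V E a b c d \<longleftrightarrow> a \<in> V \<and> b \<in> V \<and> c \<in> V \<and> d \<in> V \<and> distinct [a, b, c, d] \<and>
     E a b \<and> E c d \<and> \<not> E a c \<and> \<not> E a d \<and> \<not> E b c \<and> \<not> E b d"

definition threshold_graph :: "'a set \<Rightarrow> ('a \<Rightarrow> 'a \<Rightarrow> bool) \<Rightarrow> bool" where
  "threshold_graph V E \<longleftrightarrow> simple_graph V E \<and>
     (\<forall>a b c d. \<not> induced_P4 V E a b c d \<and> \<not> induced_C4 V E a b c d \<and> \<not> induced_2K2 V E a b c d)"

definition dominates :: "'a set \<Rightarrow> ('a \<Rightarrow> 'a \<Rightarrow> bool) \<Rightarrow> 'a \<Rightarrow> 'a \<Rightarrow> bool" where
  "dominates V E u v \<longleftrightarrow> u \<noteq> v \<and> E u v \<and> (\<forall>w \<in> V. E v w \<longrightarrow> w = u \<or> E u w)"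

definition non_terminal :: "'a set \<Rightarrow> ('a \<Rightarrow> 'a \<Rightarrow> bool) \<Rightarrow> 'a \<Rightarrow> bool" where
  "non_terminal V E t \<longleftrightarrow> (\<exists>s \<in> V - {t}. dominates V E t s)"

definition terminal :: "'a set \<Rightarrow> ('a \<Rightarrow> 'a \<Rightarrow> bool) \<Rightarrow> 'a \<Rightarrow> bool" where
  "terminal V E t \<longleftrightarrow> \<not> non_terminal V E t"

end

theory Submission
  imports Defs
begin

text \<open>In a threshold graph the neighbourhoods are nested: for any two vertices u, v we have
  N(u) \<subseteq> N[v] or N(v) \<subseteq> N[u], since a failure in both directions exhibits an induced
  P4, C4 or 2K2. Now t is non-terminal iff N(s) \<subseteq> N[t] for some neighbour s of t, and t is
  non-terminal in the complement iff N(t) \<subseteq> N[s] for some non-neighbour s of t; in any graph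
  these cannot both hold. Conversely, a terminal t has non-neighbours (otherwise it would
  dominate every other vertex); let s be one that is greatest in the nesting order. Every
  neighbour x of t has a neighbour z outside N[t], because t does not dominate x, and
  N(z) \<subseteq> N[s] forces x \<in> N[s]. Hence N(t) \<subseteq> N[s], so t is non-terminal in the complement.
  Both consequences follow by comparing the two vertices in the nesting order.\<close>

definition neighbours :: "'a set \<Rightarrow> ('a \<Rightarrow> 'a \<Rightarrow> bool) \<Rightarrow> 'a \<Rightarrow> 'a set" where
  "neighbours V E v = {w \<in> V. E v w}"

definition vicinal_le :: "'a set \<Rightarrow> ('a \<Rightarrow> 'a \<Rightarrow> bool) \<Rightarrow> 'a \<Rightarrow> 'a \<Rightarrow> bool" where
  "vicinal_le V E u v \<longleftrightarrow> neighbours V E u \<subseteq> insert v (neighbours V E v)"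

lemma simple_graphD:
  assumes "simple_graph V E"
  shows "finite V" and "E u v \<Longrightarrow> E v u" and "\<not> E v v" and "E u v \<Longrightarrow> u \<in> V \<and> v \<in> V"
  using assms unfolding simple_graph_def by auto

lemma threshold_graph_simple: "threshold_graph V E \<Longrightarrow> simple_graph V E"
  unfolding threshold_graph_def by blast

lemma threshold_graph_vicinal_total:
  assumes th: "threshold_graph V E" and "u \<in> V" and "v \<in> V"
  shows "vicinal_le V E u v \<or> vicinal_le V E v u"
proof (rule ccontr)
  assume "\<not> ?thesis"
  then obtain x y where x: "x \<in> V" "E u x" "x \<noteq> v" "\<not> E v x"
    and y: "y \<in> V" "E v y" "y \<noteq> u" "\<not> E u y"
    unfolding vicinal_le_def neighbours_def by blast
  have free: "\<not> induced_P4 V E a b c d" "\<not> induced_C4 V E a b c d" "\<not> induced_2K2 V E a b c d"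
    for a b c d using th unfolding threshold_graph_def by auto
  have sg: "simple_graph V E" using th by (rule threshold_graph_simple)
  note sym = simple_graphD(2)[OF sg] and irrefl = simple_graphD(3)[OF sg]
  have distinct: "distinct [x, u, v, y]" using x y sym irrefl by auto
  consider "E u v" "E x y" | "E u v" "\<not> E x y" | "\<not> E u v" "E x y" | "\<not> E u v" "\<not> E x y"
    by blast
  then show False
  proof cases
    case 1
    then have "induced_C4 V E x u v y"
      using assms x y distinct sym unfolding induced_C4_def by auto
    with free show False by blast
  next
    case 2
    then have "induced_P4 V E x u v y"
      using assms x y distinct sym unfolding induced_P4_def by auto
    with free show False by blast
  next
    case 3
    then have "induced_P4 V E u x y v"
      using assms x y distinct sym unfolding induced_P4_def by auto
    with free show False by blast
  next
    case 4
    then have "induced_2K2 V E u x v y"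
      using assms x y distinct sym unfolding induced_2K2_def by auto
    with free show False by blast
  qed
qed

lemma card_neighbours_less_if_vicinal_less:
  assumes sg: "simple_graph V E" and "vicinal_le V E u v" and "\<not> vicinal_le V E v u"
  shows "card (neighbours V E u) < card (neighbours V E v)"
proof -
  have fin: "finite (neighbours V E v)" using simple_graphD(1)[OF sg] by (simp add: neighbours_def)
  have "neighbours V E u - {v} \<subset> neighbours V E v - {u}"
    using assms simple_graphD(3)[OF sg] unfolding vicinal_le_def neighbours_def by auto
  then have "card (neighbours V E u - {v}) < card (neighbours V E v - {u})"
    using fin by (intro psubset_card_mono) auto
  moreover have "v \<in> neighbours V E u \<longleftrightarrow> u \<in> neighbours V E v"
    using simple_graphD(2,4)[OF sg] unfolding neighbours_def by blast
  ultimately show ?thesis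
    using fin by (cases "u \<in> neighbours V E v") (auto simp: card_Diff_singleton_if)
qed

lemma threshold_graph_vicinal_greatest:
  assumes th: "threshold_graph V E" and "S \<subseteq> V" and "S \<noteq> {}"
  obtains y where "y \<in> S" and "\<And>z. z \<in> S \<Longrightarrow> vicinal_le V E z y"
proof -
  have sg: "simple_graph V E" using th by (rule threshold_graph_simple)
  let ?deg = "\<lambda>z. card (neighbours V E z)"
  have fin: "finite (?deg ` S)" using assms(2) simple_graphD(1)[OF sg] finite_subset by blast
  then have "Max (?deg ` S) \<in> ?deg ` S" using \<open>S \<noteq> {}\<close> by simp
  then obtain y where y: "y \<in> S" and "?deg y = Max (?deg ` S)" by auto
  then have max: "?deg z \<le> ?deg y" if "z \<in> S" for z using fin that by simp
  have "vicinal_le V E z y" if z: "z \<in> S" for z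
  proof (rule ccontr)
    assume not_le: "\<not> vicinal_le V E z y"
    then have "vicinal_le V E y z"
      using threshold_graph_vicinal_total[OF th] y z assms(2) by blast
    with card_neighbours_less_if_vicinal_less[OF sg this not_le] max[OF z] show False by simp
  qed
  with y that show thesis by blast
qed

lemma dominates_iff_vicinal:
  "dominates V E t s \<longleftrightarrow> t \<noteq> s \<and> E t s \<and> vicinal_le V E s t"
  unfolding dominates_def vicinal_le_def neighbours_def by blast

lemma dominates_compl_iff_vicinal:
  assumes sg: "simple_graph V E" and "s \<in> V" and "t \<in> V"
  shows "dominates V (compl_graph V E) t s \<longleftrightarrow> t \<noteq> s \<and> \<not> E t s \<and> vicinal_le V E t s"
  using assms simple_graphD(3,4)[OF sg]
  unfolding dominates_def compl_graph_def vicinal_le_def neighbours_def by blast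

lemma non_terminal_iff_vicinal:
  "non_terminal V E t \<longleftrightarrow> (\<exists>s \<in> V. s \<noteq> t \<and> E t s \<and> vicinal_le V E s t)"
  unfolding non_terminal_def dominates_iff_vicinal by auto

lemma non_terminal_compl_iff_vicinal:
  assumes sg: "simple_graph V E" and "t \<in> V"
  shows "non_terminal V (compl_graph V E) t \<longleftrightarrow> (\<exists>s \<in> V. s \<noteq> t \<and> \<not> E t s \<and> vicinal_le V E t s)"
  using dominates_compl_iff_vicinal[OF sg _ \<open>t \<in> V\<close>] unfolding non_terminal_def by blast

lemma non_terminal_imp_compl_terminal:
  assumes sg: "simple_graph V E" and "t \<in> V" and "non_terminal V E t"
  shows "terminal V (compl_graph V E) t"
proof (rule ccontr)
  assume "\<not> terminal V (compl_graph V E) t"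
  then obtain s where s: "s \<in> V" "s \<noteq> t" "\<not> E t s" "vicinal_le V E t s"
    using non_terminal_compl_iff_vicinal[OF sg \<open>t \<in> V\<close>] unfolding terminal_def by blast
  obtain r where r: "r \<in> V" "r \<noteq> t" "E t r" "vicinal_le V E r t"
    using \<open>non_terminal V E t\<close> unfolding non_terminal_iff_vicinal by blast
  have "E s r" using r s unfolding vicinal_le_def neighbours_def by auto
  then have "E t s"
    using r s simple_graphD(2)[OF sg] unfolding vicinal_le_def neighbours_def by auto
  with s show False by blast
qed

lemma threshold_terminal_imp_compl_non_terminal:
  assumes th: "threshold_graph V E" and "card V > 1" and t: "t \<in> V" and "terminal V E t"
  shows "non_terminal V (compl_graph V E) t"
proof -
  have sg: "simple_graph V E" using th by (rule threshold_graph_simple)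
  have not_dominating: "\<not> vicinal_le V E x t" if "x \<in> V" "x \<noteq> t" "E t x" for x
    using \<open>terminal V E t\<close> that unfolding terminal_def non_terminal_iff_vicinal by blast
  let ?S = "{s \<in> V. s \<noteq> t \<and> \<not> E t s}"
  have "?S \<noteq> {}"
  proof
    assume S_empty: "?S = {}"
    have "\<not> V \<subseteq> {t}" using \<open>card V > 1\<close> card_mono[of "{t}" V] by auto
    then obtain x where "x \<in> V" "x \<noteq> t" by blast
    moreover have "vicinal_le V E x t"
      using S_empty unfolding vicinal_le_def neighbours_def by auto
    ultimately show False using S_empty not_dominating by blast
  qed
  then obtain s where s: "s \<in> ?S" and greatest: "\<And>z. z \<in> ?S \<Longrightarrow> vicinal_le V E z s"
    using threshold_graph_vicinal_greatest[OF th, of ?S] by blast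
  have "vicinal_le V E t s"
    unfolding vicinal_le_def
  proof
    fix x assume x: "x \<in> neighbours V E t"
    then have "\<not> vicinal_le V E x t"
      using not_dominating simple_graphD(3)[OF sg] unfolding neighbours_def by auto
    then obtain z where z: "z \<in> ?S" "E x z"
      unfolding vicinal_le_def neighbours_def by auto
    then show "x \<in> insert s (neighbours V E s)"
      using greatest[OF z(1)] x simple_graphD(2)[OF sg] unfolding vicinal_le_def neighbours_def
      by auto
  qed
  with s show ?thesis using non_terminal_compl_iff_vicinal[OF sg t] by blast
qed

lemma threshold_terminal_iff_compl_non_terminal:
  assumes "threshold_graph V E" and "card V > 1" and "t \<in> V"
  shows "terminal V E t \<longleftrightarrow> \<not> terminal V (compl_graph V E) t"
  using threshold_terminal_imp_compl_non_terminal[OF assms]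
    non_terminal_imp_compl_terminal[OF threshold_graph_simple[OF assms(1)] assms(3)]
  unfolding terminal_def by blast

lemma threshold_terminal_not_adjacent:
  assumes th: "threshold_graph V E" and "s \<in> V" "t \<in> V" "s \<noteq> t"
    and "terminal V E s" "terminal V E t"
  shows "\<not> E s t"
proof
  assume "E s t"
  then have "E t s" by (rule simple_graphD(2)[OF threshold_graph_simple[OF th]])
  have "vicinal_le V E s t \<or> vicinal_le V E t s"
    using threshold_graph_vicinal_total[OF th \<open>s \<in> V\<close> \<open>t \<in> V\<close>] .
  then have "non_terminal V E t \<or> non_terminal V E s"
    using assms(2-4) \<open>E s t\<close> \<open>E t s\<close> unfolding non_terminal_iff_vicinal by auto
  with assms(5,6) show False unfolding terminal_def by blast
qed

lemma threshold_non_terminal_adjacent: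
  assumes th: "threshold_graph V E" and "s \<in> V" "t \<in> V" "s \<noteq> t"
    and "non_terminal V E s" "non_terminal V E t"
  shows "E s t"
proof (rule ccontr)
  assume "\<not> E s t"
  have sg: "simple_graph V E" using th by (rule threshold_graph_simple)
  then have "\<not> E t s" using \<open>\<not> E s t\<close> simple_graphD(2)[OF sg, of t s] by blast
  have "vicinal_le V E s t \<Longrightarrow> non_terminal V (compl_graph V E) s"
    using non_terminal_compl_iff_vicinal[OF sg \<open>s \<in> V\<close>] assms(3,4) \<open>\<not> E s t\<close> by auto
  moreover have "vicinal_le V E t s \<Longrightarrow> non_terminal V (compl_graph V E) t"
    using non_terminal_compl_iff_vicinal[OF sg \<open>t \<in> V\<close>] assms(2,4) \<open>\<not> E t s\<close> by auto
  ultimately show False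
    using threshold_graph_vicinal_total[OF th \<open>s \<in> V\<close> \<open>t \<in> V\<close>] assms(2,3,5,6)
      non_terminal_imp_compl_terminal[OF sg] unfolding terminal_def by blast
qed

theorem mainTheorem15:
  fixes V :: "'a set" and E :: "'a \<Rightarrow> 'a \<Rightarrow> bool"
  assumes "threshold_graph V E" and "card V > 1"
  shows "(\<forall>t \<in> V. terminal V E t \<longleftrightarrow> \<not> terminal V (compl_graph V E) t)
       \<and> (\<forall>s \<in> V. \<forall>t \<in> V. s \<noteq> t \<longrightarrow> terminal V E s \<longrightarrow> terminal V E t \<longrightarrow> \<not> E s t)
       \<and> (\<forall>s \<in> V. \<forall>t \<in> V. s \<noteq> t \<longrightarrow> non_terminal V E s \<longrightarrow> non_terminal V E t \<longrightarrow> E s t)"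
  using threshold_terminal_iff_compl_non_terminal[OF assms]
    threshold_terminal_not_adjacent[OF assms(1)] threshold_non_terminal_adjacent[OF assms(1)]
  by blast

end
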